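(* Let $T$ be a Steiner-closed search tree of a tree $G$, and let $\Pi=p_0,p_1,\dots,p_j$ be the path in $T$ from the root $p_0$ to a node $p_j$. For any $i\in\{1,\dots,j\}$, let $\Pi'=\{p_i,\dots,p_j\}$. Then removing the vertices of $\mathrm{CH}(\Pi')$ from $\mathrm{CH}(\Pi)$ leaves a graph with at most $2$ connected components.
   Context: Search tree on a tree: a rooted tree $T$ is a valid search tree on an unrooted tree $G$ if the root $r$ of $T$ is a vertex of $G$ and the subtrees of $T\setminus r$ are valid search trees on the connected components of $G\setminus r$. For vertices $a,b$ of $G$, $P(a,b)$ is the vertex set of the path from $a$ to $b$ in $G$. Convex hull: for $S\subseteq V(G)$, $\mathrm{CH}(S)$ is the subgraph of $G$ induced by $\bigcup_{a,b\in S}P(a,b)$. A set $S$ is Steiner-closed (with respect to $G$) if every vertex of $\mathrm{CH}(S)\setminus S$ has degree exactly $2$ in $\mathrm{CH}(S)$. A search tree $T$ of $G$ is Steiner-closed if for every node $v$ of $T$, the set of nodes on the path in $T$ from the root to $v$ is a Steiner-closed set with respect to $G$. *)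

theory Defs
  imports Main
begin

definition is_path :: "('a \<Rightarrow> 'a \<Rightarrow> bool) \<Rightarrow> 'a list \<Rightarrow> bool" where
  "is_path E ps \<longleftrightarrow> ps \<noteq> [] \<and> distinct ps \<and>
     (\<forall>i. Suc i < length ps \<longrightarrow> E (ps ! i) (ps ! Suc i))"

definition is_tree :: "'a set \<Rightarrow> ('a \<Rightarrow> 'a \<Rightarrow> bool) \<Rightarrow> bool" where
  "is_tree V E \<longleftrightarrow> finite V \<and> V \<noteq> {} \<and>
     (\<forall>u v. E u v \<longrightarrow> u \<in> V \<and> v \<in> V \<and> E v u \<and> u \<noteq> v) \<and>
     (\<forall>a\<in>V. \<forall>b\<in>V. \<exists>!ps. is_path E ps \<and> hd ps = a \<and> last ps = b)"

definition path_verts :: "('a \<Rightarrow> 'a \<Rightarrow> bool) \<Rightarrow> 'a \<Rightarrow> 'a \<Rightarrow> 'a set" where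
  "path_verts E a b = {v. \<exists>ps. is_path E ps \<and> hd ps = a \<and> last ps = b \<and> v \<in> set ps}"

text \<open>Vertex set of the convex hull CH(S) (the hull is the subgraph induced by it).\<close>
definition hull_verts :: "('a \<Rightarrow> 'a \<Rightarrow> bool) \<Rightarrow> 'a set \<Rightarrow> 'a set" where
  "hull_verts E S = (\<Union>a\<in>S. \<Union>b\<in>S. path_verts E a b)"

definition steiner_closed :: "('a \<Rightarrow> 'a \<Rightarrow> bool) \<Rightarrow> 'a set \<Rightarrow> bool" where
  "steiner_closed E S \<longleftrightarrow>
     (\<forall>v \<in> hull_verts E S - S. card {u \<in> hull_verts E S. E v u} = 2)"

definition connected_set :: "('a \<Rightarrow> 'a \<Rightarrow> bool) \<Rightarrow> 'a set \<Rightarrow> bool" where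
  "connected_set E C \<longleftrightarrow>
     (\<forall>a\<in>C. \<forall>b\<in>C. \<exists>ps. is_path E ps \<and> hd ps = a \<and> last ps = b \<and> set ps \<subseteq> C)"

definition components :: "('a \<Rightarrow> 'a \<Rightarrow> bool) \<Rightarrow> 'a set \<Rightarrow> 'a set set" where
  "components E S = {C. C \<subseteq> S \<and> C \<noteq> {} \<and> connected_set E C \<and>
       (\<forall>u\<in>C. \<forall>v\<in>S - C. \<not> E u v)}"

datatype 'a rtree = Node 'a "'a rtree list"

inductive search_tree :: "('a \<Rightarrow> 'a \<Rightarrow> bool) \<Rightarrow> 'a set \<Rightarrow> 'a rtree \<Rightarrow> bool"
  for E where
  "r \<in> S \<Longrightarrow> distinct cs \<Longrightarrow> set cs = components E (S - {r}) \<Longrightarrow>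
   length ts = length cs \<Longrightarrow> (\<forall>i < length ts. search_tree E (cs ! i) (ts ! i)) \<Longrightarrow>
   search_tree E S (Node r ts)"

inductive root_path :: "'a rtree \<Rightarrow> 'a list \<Rightarrow> bool" where
  "root_path (Node r ts) [r]"
| "t \<in> set ts \<Longrightarrow> root_path t p \<Longrightarrow> root_path (Node r ts) (r # p)"

definition steiner_closed_tree :: "('a \<Rightarrow> 'a \<Rightarrow> bool) \<Rightarrow> 'a rtree \<Rightarrow> bool" where
  "steiner_closed_tree E T \<longleftrightarrow> (\<forall>p. root_path T p \<longrightarrow> steiner_closed E (set p))"

end

theory Submission
  imports Defs
begin

text \<open>
  Split the root path into the prefix A = {p_0, ..., p_(i-1)} and the suffix P = {p_i, ..., p_j}.
  A is Steiner-closed, being itself a root path, and P lies in the region of G in which the subtree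
  below p_(i-1) lives: a connected set avoiding A, hence a convex one, so CH(P) does not meet A.
  Every component of CH(A \<union> P) - CH(P) contains a vertex of A.  If there were three components,
  pick q1, q2, q3 of A in different ones; the path between any two of them must cross the convex
  set CH(P), which forces the median x of q1, q2, q3 into CH(P).  So x \<in> CH(A) - A, while the
  three paths from x towards q1, q2, q3 leave x through three distinct neighbours, all in CH(A):
  x would have degree at least 3 in CH(A), contradicting Steiner-closedness of A.
\<close>

lemma is_path_iff_successively:
  "is_path E ps \<longleftrightarrow> ps \<noteq> [] \<and> distinct ps \<and> successively E ps"
  by (simp add: is_path_def successively_conv_nth)

lemma successively_takeD: "successively P xs \<Longrightarrow> successively P (take n xs)"
  and successively_dropD: "successively P xs \<Longrightarrow> successively P (drop n xs)"
  using successively_append_iff[of P "take n xs" "drop n xs"] by simp_all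

lemma is_path_rev:
  assumes "\<And>u v. E u v \<Longrightarrow> E v u" "is_path E ps"
  shows "is_path E (rev ps)"
  using assms by (auto simp: is_path_iff_successively elim: successively_mono)

lemma is_path_slice:
  assumes "is_path E ps" "m \<le> n" "n < length ps"
  shows "is_path E (take (Suc n - m) (drop m ps))"
    and "hd (take (Suc n - m) (drop m ps)) = ps ! m"
    and "last (take (Suc n - m) (drop m ps)) = ps ! n"
    and "set (take (Suc n - m) (drop m ps)) = (!) ps ` {m..n}"
proof -
  let ?qs = "take (Suc n - m) (drop m ps)"
  have len: "length ?qs = Suc n - m" and nth: "\<And>j. j < Suc n - m \<Longrightarrow> ?qs ! j = ps ! (m + j)"
    using assms by simp_all
  show "is_path E ?qs"
    using assms len by (auto simp: is_path_def nth simp del: length_take length_drop)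
  show "hd ?qs = ps ! m" using assms by (simp add: hd_conv_nth len nth)
  show "last ?qs = ps ! n" using assms by (simp add: last_conv_nth len nth)
  have "set ?qs = (!) ?qs ` {0..<Suc n - m}"
    using nth_image[of "length ?qs" ?qs] len by simp
  also have "\<dots> = (!) ps ` (plus m ` {0..<Suc n - m})"
    unfolding image_image using nth by (intro image_cong) auto
  also have "plus m ` {0..<Suc n - m} = {m..n}"
    using assms(2) by auto
  finally show "set ?qs = (!) ps ` {m..n}" .
qed

lemma obtain_path_in_walk:
  assumes "successively E ws" "ws \<noteq> []"
  obtains ps where "is_path E ps" "hd ps = hd ws" "last ps = last ws" "set ps \<subseteq> set ws"
  using assms
proof (induction "length ws" arbitrary: ws rule: less_induct)
  case less
  show ?case
  proof (cases "distinct ws")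
    case True
    then show ?thesis using less.prems by (auto simp: is_path_iff_successively)
  next
    case False
    then obtain xs y ys zs where ws: "ws = xs @ [y] @ ys @ [y] @ zs"
      using not_distinct_decomp by blast
    let ?ws' = "xs @ [y] @ zs"
    have "successively E (xs @ [y])" "successively E (y # zs)"
      using less.prems(2) successively_append_iff[of E "xs @ [y]" "ys @ [y] @ zs"]
        successively_append_iff[of E "xs @ [y] @ ys" "y # zs"] unfolding ws by auto
    then have "successively E ?ws'"
      using successively_append_iff[of E "xs @ [y]" zs] by (cases zs) auto
    moreover have "hd ?ws' = hd ws" "last ?ws' = last ws" "set ?ws' \<subseteq> set ws"
      unfolding ws by (cases xs; cases zs; auto)+
    ultimately show ?thesis
      using less.hyps[of ?ws'] less.prems(1) ws by fastforce
  qed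
qed

lemma is_path_splice:
  assumes "is_path E qs" "is_path E ps" "k < length qs" "m < length ps" "qs ! k = ps ! m"
    and "set (take k qs) \<inter> set ps = {}"
  shows "is_path E (take k qs @ drop m ps)"
proof -
  have "distinct (take k qs @ drop m ps)"
    using assms(1,2,6) by (auto simp: is_path_def dest: in_set_dropD)
  moreover have "E (last (take k qs)) (hd (drop m ps))" if "0 < k"
  proof -
    have "last (take k qs) = qs ! (k - 1)" using that assms(3) by (subst last_conv_nth) (auto simp: min_def)
    moreover have "hd (drop m ps) = qs ! Suc (k - 1)" using assms(4,5) that by (simp add: hd_drop_conv_nth)
    moreover have "E (qs ! (k - 1)) (qs ! Suc (k - 1))"
      using assms(1,3) that successively_nth[of E qs "k - 1"] by (simp add: is_path_iff_successively)
    ultimately show ?thesis by simp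
  qed
  moreover have "successively E (take k qs)" "successively E (drop m ps)"
    using assms(1,2) by (simp_all add: is_path_iff_successively successively_takeD successively_dropD)
  ultimately show ?thesis using assms(4) by (auto simp: is_path_iff_successively successively_append_iff)
qed

definition path_convex :: "('a \<Rightarrow> 'a \<Rightarrow> bool) \<Rightarrow> 'a set \<Rightarrow> bool" where
  "path_convex E B \<longleftrightarrow> (\<forall>u\<in>B. \<forall>v\<in>B. path_verts E u v \<subseteq> B)"

lemma hull_verts_subset_path_convex:
  "path_convex E B \<Longrightarrow> S \<subseteq> B \<Longrightarrow> hull_verts E S \<subseteq> B"
  unfolding path_convex_def hull_verts_def by blast

lemma path_verts_subset_hull_verts: "a \<in> S \<Longrightarrow> b \<in> S \<Longrightarrow> path_verts E a b \<subseteq> hull_verts E S"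
  unfolding hull_verts_def by blast

lemma walk_in_component:
  assumes "C \<in> components E S" "successively E ps" "set ps \<subseteq> S" "ps \<noteq> []" "hd ps \<in> C"
  shows "set ps \<subseteq> C"
  using assms(2-5)
proof (induction ps)
  case (Cons x xs)
  then show ?case
    using assms(1) unfolding components_def by (cases xs) auto
qed simp

lemma components_disjoint:
  assumes "C \<in> components E S" "D \<in> components E S" "x \<in> C" "x \<in> D"
  shows "C = D"
proof -
  have "C \<subseteq> D" if CD: "C \<in> components E S" "D \<in> components E S" "x \<in> C" "x \<in> D" for C D
  proof
    fix y assume "y \<in> C"
    then obtain ps where "is_path E ps" "hd ps = x" "last ps = y" "set ps \<subseteq> C"
      using CD unfolding components_def connected_set_def by blast
    moreover have "C \<subseteq> S" using CD unfolding components_def by blast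
    ultimately have "set ps \<subseteq> D"
      using walk_in_component[OF CD(2)] CD by (auto simp: is_path_iff_successively)
    then show "y \<in> D" using \<open>is_path E ps\<close> \<open>last ps = y\<close> by (auto simp: is_path_def)
  qed
  then show ?thesis using assms by blast
qed

locale tree_graph =
  fixes V :: "'a set" and E :: "'a \<Rightarrow> 'a \<Rightarrow> bool"
  assumes is_tree: "is_tree V E"
begin

lemma finite_V: "finite V"
  and edges: "\<forall>u v. E u v \<longrightarrow> u \<in> V \<and> v \<in> V \<and> E v u \<and> u \<noteq> v"
  and unique_path: "a \<in> V \<Longrightarrow> b \<in> V \<Longrightarrow> \<exists>!ps. is_path E ps \<and> hd ps = a \<and> last ps = b"
  using is_tree unfolding is_tree_def by simp_all

lemma edge_sym: "E u v \<Longrightarrow> E v u"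
  and edge_in_V: "E u v \<Longrightarrow> u \<in> V \<and> v \<in> V"
  and edge_irrefl: "\<not> E u u"
  using edges by blast+

lemma path_subset_V:
  assumes "is_path E ps" "hd ps \<in> V"
  shows "set ps \<subseteq> V"
proof -
  have "successively E ps" "ps \<noteq> []" using assms(1) by (simp_all add: is_path_iff_successively)
  then show ?thesis using assms(2)
  proof (induction ps)
    case (Cons x xs)
    then show ?case by (cases xs) (auto dest: edge_in_V)
  qed simp
qed

lemma path_unique:
  assumes "is_path E ps" "is_path E qs" "hd ps = hd qs" "last ps = last qs" "hd ps \<in> V"
  shows "ps = qs"
proof -
  have "last ps \<in> V" using path_subset_V[OF assms(1,5)] assms(1) by (auto simp: is_path_def)
  then have uniq: "\<exists>\<^sub>\<le>\<^sub>1rs. is_path E rs \<and> hd rs = hd ps \<and> last rs = last ps"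
    using unique_path[OF assms(5)] by (simp add: ex1_iff_ex_Uniq)
  show ?thesis by (rule Uniq_D[OF uniq]) (use assms in auto)
qed

lemma path_verts_path:
  assumes "is_path E ps" "hd ps \<in> V"
  shows "path_verts E (hd ps) (last ps) = set ps"
proof -
  have unique: "qs = ps" if "is_path E qs" "hd qs = hd ps" "last qs = last ps" for qs
    by (rule path_unique[OF that(1) assms(1)]) (use that assms(2) in auto)
  show ?thesis
    unfolding path_verts_def using assms(1) unique by blast
qed

lemma obtain_path:
  assumes "a \<in> V" "b \<in> V"
  obtains ps where "is_path E ps" "hd ps = a" "last ps = b" "path_verts E a b = set ps"
proof -
  obtain ps where "is_path E ps" "hd ps = a" "last ps = b"
    using ex1_implies_ex[OF unique_path[OF assms]] by blast
  moreover from this have "path_verts E a b = set ps" using path_verts_path[of ps] assms(1) by simp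
  ultimately show ?thesis by (rule that)
qed

lemma path_verts_commute: "path_verts E a b = path_verts E b a"
proof -
  have "path_verts E a b \<subseteq> path_verts E b a" for a b
  proof
    fix v assume "v \<in> path_verts E a b"
    then obtain ps where "is_path E ps" "hd ps = a" "last ps = b" "v \<in> set ps"
      unfolding path_verts_def by blast
    moreover from this have "is_path E (rev ps)" using is_path_rev edge_sym by blast
    ultimately show "v \<in> path_verts E b a"
      unfolding path_verts_def by (intro CollectI exI[of _ "rev ps"]) (auto simp: hd_rev last_rev)
  qed
  then show ?thesis by blast
qed

lemma path_verts_subset_V:
  assumes "a \<in> V" "b \<in> V"
  shows "path_verts E a b \<subseteq> V"
proof -
  obtain ps where "is_path E ps" "hd ps = a" "path_verts E a b = set ps"
    using obtain_path[OF assms] by metis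
  then show ?thesis using path_subset_V assms(1) by metis
qed

lemma ends_in_path_verts:
  assumes "a \<in> V" "b \<in> V"
  shows "a \<in> path_verts E a b" "b \<in> path_verts E a b"
proof -
  obtain ps where "is_path E ps" "hd ps = a" "last ps = b" "path_verts E a b = set ps"
    using obtain_path[OF assms] by blast
  then show "a \<in> path_verts E a b" "b \<in> path_verts E a b" by (auto simp: is_path_def)
qed

lemma path_verts_same: "a \<in> V \<Longrightarrow> path_verts E a a = {a}"
  using path_verts_path[of "[a]"] by (simp add: is_path_def)

lemma path_verts_triangle:
  assumes "a \<in> V" "b \<in> V" "c \<in> V"
  shows "path_verts E a c \<subseteq> path_verts E a b \<union> path_verts E b c"
proof -
  obtain ps where ps: "is_path E ps" "hd ps = a" "last ps = b" "path_verts E a b = set ps"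
    using obtain_path assms by metis
  obtain qs where qs: "is_path E qs" "hd qs = b" "last qs = c" "path_verts E b c = set qs"
    using obtain_path assms by metis
  obtain qs' where qs_eq: "qs = b # qs'" using qs by (cases qs) (auto simp: is_path_def)
  have "qs' = [] \<or> E b (hd qs') \<and> successively E qs'"
    using qs qs_eq by (simp add: is_path_iff_successively successively_Cons)
  then have walk: "successively E (ps @ qs')"
    using ps by (auto simp: successively_append_iff is_path_iff_successively)
  have ne: "ps @ qs' \<noteq> []" using ps by (simp add: is_path_def)
  obtain rs where rs: "is_path E rs" "hd rs = hd (ps @ qs')" "last rs = last (ps @ qs')"
    "set rs \<subseteq> set (ps @ qs')"
    by (rule obtain_path_in_walk[OF walk ne])
  moreover have "hd (ps @ qs') = a" "last (ps @ qs') = c"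
    using ps qs qs_eq by (auto simp: is_path_def)
  ultimately have "path_verts E a c = set rs" using path_verts_path[OF rs(1)] assms(1) by simp
  then show ?thesis using rs(4) ps(4) qs(4) qs_eq by auto
qed

lemma path_verts_nth:
  assumes "is_path E ps" "hd ps \<in> V" "m \<le> n" "n < length ps"
  shows "path_verts E (ps ! m) (ps ! n) = (!) ps ` {m..n}"
proof -
  have "ps ! m \<in> V" using path_subset_V[OF assms(1,2)] assms by auto
  then show ?thesis
    using path_verts_path[OF is_path_slice(1)[OF assms(1,3,4)]] is_path_slice[OF assms(1,3,4)]
    by simp
qed

lemma obtain_path_through:
  assumes "a \<in> V" "b \<in> V" "c \<in> path_verts E a b"
  obtains ps k where "is_path E ps" "hd ps = a" "last ps = b" "path_verts E a b = set ps"
    "k < length ps" "ps ! k = c"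
    "path_verts E a c = (!) ps ` {0..k}" "path_verts E c b = (!) ps ` {k..length ps - 1}"
proof -
  obtain ps where ps: "is_path E ps" "hd ps = a" "last ps = b" "path_verts E a b = set ps"
    using obtain_path assms by metis
  moreover obtain k where "k < length ps" "ps ! k = c"
    using assms ps by (metis in_set_conv_nth)
  moreover have "ps ! 0 = a" "ps ! (length ps - 1) = b"
    using ps by (auto simp: is_path_def hd_conv_nth last_conv_nth)
  ultimately show ?thesis
    using that path_verts_nth[of ps 0 k] path_verts_nth[of ps k "length ps - 1"] assms by auto
qed

lemma path_verts_subpath:
  assumes "a \<in> V" "b \<in> V" "c \<in> path_verts E a b"
  shows "path_verts E a c \<subseteq> path_verts E a b"
proof -
  obtain ps k where "path_verts E a b = set ps" "k < length ps" "path_verts E a c = (!) ps ` {0..k}"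
    using obtain_path_through[OF assms] by metis
  then show ?thesis by auto
qed

lemma path_verts_between:
  assumes "a \<in> V" "b \<in> V" "c \<in> path_verts E a b" "y \<in> path_verts E a c" "z \<in> path_verts E c b"
  shows "c \<in> path_verts E y z"
proof -
  obtain ps k where ps: "is_path E ps" "hd ps = a" "k < length ps" "ps ! k = c"
    "path_verts E a c = (!) ps ` {0..k}" "path_verts E c b = (!) ps ` {k..length ps - 1}"
    using obtain_path_through[OF assms(1-3)] by metis
  obtain m n where "m \<le> k" "y = ps ! m" "k \<le> n" "n < length ps" "z = ps ! n"
    using assms(4,5) ps by fastforce
  then show ?thesis using path_verts_nth[of ps m n] ps assms(1) by auto
qed

lemma neighbour_on_path_eq_second:
  assumes "is_path E ps" "hd ps \<in> V" "u \<in> set ps" "E (hd ps) u"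
  shows "u = ps ! 1"
proof -
  obtain j where j: "j < length ps" "ps ! j = u" using assms(3) by (metis in_set_conv_nth)
  have "j \<noteq> 0" using j assms(1,4) edge_irrefl by (cases j) (auto simp: is_path_def hd_conv_nth)
  \<comment> \<open>the edge to u shortcuts ps into a second path with the same ends, so it skips nothing\<close>
  let ?qs = "hd ps # drop j ps"
  have "hd ps \<notin> set (drop j ps)"
    using assms(1) \<open>j \<noteq> 0\<close> by (cases ps; cases j) (auto simp: is_path_def dest: in_set_dropD)
  moreover have "hd (drop j ps) = u" using j by (simp add: hd_drop_conv_nth)
  ultimately have "is_path E ?qs"
    using assms j by (auto simp: is_path_iff_successively successively_Cons successively_dropD)
  moreover have "last ?qs = last ps" using j by simp
  ultimately have "?qs = ps" using path_unique assms(1,2) by simp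
  then have "Suc (length ps - j) = length ps" by (metis length_Cons length_drop)
  then have "j = 1" using j by simp
  then show ?thesis using j by simp
qed

lemma neighbour_towards_unique:
  assumes "x \<in> V" "a \<in> V" "E x u" "E x v" "u \<in> path_verts E x a" "v \<in> path_verts E x a"
  shows "u = v"
proof -
  obtain ps where "is_path E ps" "hd ps = x" "path_verts E x a = set ps"
    using obtain_path assms by metis
  then show ?thesis using neighbour_on_path_eq_second assms by metis
qed

lemma interior_neighbours:
  assumes "a \<in> V" "b \<in> V" "x \<in> path_verts E a b" "x \<noteq> a" "x \<noteq> b"
  obtains u v where "u \<noteq> v" "E x u" "E x v" "u \<in> path_verts E x a" "v \<in> path_verts E x b"
proof -
  obtain ps k where ps: "is_path E ps" "hd ps = a" "last ps = b" "k < length ps" "ps ! k = x"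
    "path_verts E a x = (!) ps ` {0..k}" "path_verts E x b = (!) ps ` {k..length ps - 1}"
    using obtain_path_through[OF assms(1-3)] by metis
  have "0 < k" using ps assms(4) by (cases k) (auto simp: is_path_def hd_conv_nth)
  moreover have "Suc k < length ps"
    using ps assms(5) by (metis is_path_def last_conv_nth Suc_lessI diff_Suc_1)
  moreover have "E (ps ! (k - 1)) (ps ! Suc (k - 1))"
    using ps(1,4) \<open>0 < k\<close> successively_nth[of E ps "k - 1"] by (simp add: is_path_iff_successively)
  ultimately have "ps ! (k - 1) \<noteq> ps ! Suc k" "E x (ps ! (k - 1))" "E x (ps ! Suc k)"
    "ps ! (k - 1) \<in> path_verts E a x" "ps ! Suc k \<in> path_verts E x b"
    using ps edge_sym by (auto simp: is_path_def nth_eq_iff_index_eq)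
  then show ?thesis using that path_verts_commute by metis
qed

lemma median_exists:
  assumes "q1 \<in> V" "q2 \<in> V" "q3 \<in> V"
  obtains x where "x \<in> path_verts E q1 q2" "x \<in> path_verts E q2 q3" "x \<in> path_verts E q3 q1"
proof -
  obtain ps where ps: "is_path E ps" "hd ps = q1" "last ps = q2" "path_verts E q1 q2 = set ps"
    using obtain_path assms by metis
  obtain qs where qs: "is_path E qs" "hd qs = q3" "last qs = q1" "path_verts E q3 q1 = set qs"
    using obtain_path assms by metis
  have "qs ! (length qs - 1) \<in> set ps"
    using ps qs by (metis hd_in_set is_path_def last_conv_nth)
  \<comment> \<open>the median: the first vertex of the path from q3 to q1 that lies on the path from q1 to q2\<close>
  define k where "k = (LEAST k. qs ! k \<in> set ps)"
  have "k \<le> length qs - 1" "0 < length qs"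
    unfolding k_def using qs Least_le \<open>qs ! (length qs - 1) \<in> set ps\<close> by (auto simp: is_path_def)
  then have k: "k < length qs" "qs ! k \<in> set ps" "\<forall>j<k. qs ! j \<notin> set ps"
    unfolding k_def using LeastI not_less_Least \<open>qs ! (length qs - 1) \<in> set ps\<close> by (linarith, metis, blast)
  then obtain m where m: "m < length ps" "ps ! m = qs ! k" by (metis in_set_conv_nth)
  let ?rs = "take k qs @ drop m ps"
  have "set (take k qs) \<inter> set ps = {}" using k by (auto simp: in_set_conv_nth)
  then have "is_path E ?rs" using is_path_splice[OF qs(1) ps(1) k(1) m(1)] m(2) by simp
  moreover have "hd ?rs = q3"
    using qs(1,2) k(1) m by (cases k) (auto simp: is_path_def hd_drop_conv_nth hd_conv_nth nth_append)
  moreover have "last ?rs = q2" using ps(3) m(1) by (simp add: last_drop)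
  ultimately have "path_verts E q3 q2 = set ?rs" using path_verts_path[of ?rs] assms(3) by simp
  moreover have "ps ! m \<in> set (drop m ps)" using m by (metis Cons_nth_drop_Suc list.set_intros(1))
  moreover have "ps ! m \<in> set ps" "ps ! m \<in> set qs" using m k(1) by (metis nth_mem)+
  ultimately show ?thesis using ps(4) qs(4) path_verts_commute[of q2 q3] by (intro that) auto
qed

lemma median_branches:
  assumes "q1 \<in> V" "q2 \<in> V" "q3 \<in> V"
    and "x \<in> path_verts E q1 q2" "x \<in> path_verts E q2 q3" "x \<in> path_verts E q3 q1"
    and "x \<notin> {q1, q2, q3}"
  obtains u1 u2 u3 where "distinct [u1, u2, u3]" "E x u1" "E x u2" "E x u3"
    "{u1, u2, u3} \<subseteq> path_verts E q1 q2 \<union> path_verts E q2 q3"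
proof -
  have x: "x \<in> V" using assms(1,2,4) path_verts_subset_V by blast
  obtain u1 u2 where u12: "u1 \<noteq> u2" "E x u1" "E x u2" "u1 \<in> path_verts E x q1" "u2 \<in> path_verts E x q2"
    using interior_neighbours[OF assms(1,2,4)] assms(7) by auto
  obtain v2 u3 where u23: "v2 \<noteq> u3" "E x v2" "E x u3" "v2 \<in> path_verts E x q2" "u3 \<in> path_verts E x q3"
    using interior_neighbours[OF assms(2,3,5)] assms(7) by auto
  obtain w3 w1 where u31: "w3 \<noteq> w1" "E x w3" "E x w1" "w3 \<in> path_verts E x q3" "w1 \<in> path_verts E x q1"
    using interior_neighbours[OF assms(3,1,6)] assms(7) by auto
  have "v2 = u2" using neighbour_towards_unique[OF x assms(2) u23(2) u12(3) u23(4) u12(5)] .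
  moreover have "w3 = u3" using neighbour_towards_unique[OF x assms(3) u31(2) u23(3) u31(4) u23(5)] .
  moreover have "w1 = u1" using neighbour_towards_unique[OF x assms(1) u31(3) u12(2) u31(5) u12(4)] .
  moreover have "path_verts E x q1 \<subseteq> path_verts E q1 q2"
    using path_verts_subpath[OF assms(1,2,4)] path_verts_commute[of x q1] by simp
  moreover have "path_verts E x q2 \<subseteq> path_verts E q1 q2"
    using path_verts_subpath[OF assms(2,1), of x] assms(4)
    by (simp add: path_verts_commute[of q2 q1] path_verts_commute[of q2 x])
  moreover have "path_verts E x q3 \<subseteq> path_verts E q2 q3"
    using path_verts_subpath[OF assms(3,2), of x] assms(5)
    by (simp add: path_verts_commute[of q3 q2] path_verts_commute[of q3 x])
  ultimately show ?thesis using u12 u23 u31 by (intro that[of u1 u2 u3]) auto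
qed

lemma path_convex_hull_verts:
  assumes "S \<subseteq> V"
  shows "path_convex E (hull_verts E S)"
  unfolding path_convex_def
proof (intro ballI)
  fix u v assume "u \<in> hull_verts E S" "v \<in> hull_verts E S"
  then obtain a b c d where abcd: "a \<in> S" "b \<in> S" "u \<in> path_verts E a b"
    "c \<in> S" "d \<in> S" "v \<in> path_verts E c d"
    unfolding hull_verts_def by blast
  then have V: "a \<in> V" "b \<in> V" "c \<in> V" "d \<in> V" "u \<in> V" "v \<in> V"
    using assms path_verts_subset_V by blast+
  have "path_verts E u v \<subseteq> path_verts E u a \<union> path_verts E a c \<union> path_verts E c v"
    using path_verts_triangle[of u a v] path_verts_triangle[of a c v] V by blast
  moreover have "path_verts E u a \<subseteq> path_verts E a b"
    using path_verts_subpath[OF V(1,2) abcd(3)] by (simp add: path_verts_commute[of u a])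
  moreover have "path_verts E c v \<subseteq> path_verts E c d"
    using path_verts_subpath[OF V(3,4) abcd(6)] .
  ultimately show "path_verts E u v \<subseteq> hull_verts E S"
    using path_verts_subset_hull_verts[of _ S] abcd by blast
qed

lemma path_convex_if_connected:
  assumes "R \<subseteq> V" "connected_set E R"
  shows "path_convex E R"
  unfolding path_convex_def
proof (intro ballI)
  fix a b assume "a \<in> R" "b \<in> R"
  then obtain ps where "is_path E ps" "hd ps = a" "last ps = b" "set ps \<subseteq> R"
    using assms(2) unfolding connected_set_def by blast
  moreover from this have "path_verts E a b = set ps"
    using path_verts_path[of ps] assms(1) \<open>a \<in> R\<close> by auto
  ultimately show "path_verts E a b \<subseteq> R" by simp
qed

lemma median_in_path_convex:
  assumes "q1 \<in> V" "q2 \<in> V" "q3 \<in> V" "path_convex E B"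
    and "path_verts E q1 q2 \<inter> B \<noteq> {}" "path_verts E q2 q3 \<inter> B \<noteq> {}" "path_verts E q3 q1 \<inter> B \<noteq> {}"
    and "x \<in> path_verts E q1 q2" "x \<in> path_verts E q2 q3" "x \<in> path_verts E q3 q1"
  shows "x \<in> B"
proof -
  have x: "x \<in> V" using assms(1,2,8) path_verts_subset_V by blast
  have leg: "path_verts E a x \<inter> B \<noteq> {} \<or> path_verts E b x \<inter> B \<noteq> {}"
    if "a \<in> V" "b \<in> V" "path_verts E a b \<inter> B \<noteq> {}" for a b
  proof -
    have "path_verts E a b \<subseteq> path_verts E a x \<union> path_verts E b x"
      using path_verts_triangle[OF that(1) x that(2)] by (simp add: path_verts_commute[of x b])
    then show ?thesis using that(3) by blast
  qed
  have between: "x \<in> B"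
    if ab: "a \<in> V" "b \<in> V" "x \<in> path_verts E a b"
      "path_verts E a x \<inter> B \<noteq> {}" "path_verts E b x \<inter> B \<noteq> {}" for a b
  proof -
    obtain y z where "y \<in> path_verts E a x" "z \<in> path_verts E x b" "y \<in> B" "z \<in> B"
      using ab(4,5) path_verts_commute[of b x] by blast
    then have "x \<in> path_verts E y z" "path_verts E y z \<subseteq> B"
      using path_verts_between[OF ab(1-3)] assms(4) unfolding path_convex_def by blast+
    then show ?thesis by blast
  qed
  \<comment> \<open>two of the three legs from x meet B, and x lies between them\<close>
  show ?thesis
    using leg[OF assms(1,2,5)] leg[OF assms(2,3,6)] leg[OF assms(3,1,7)]
      between[OF assms(1,2,8)] between[OF assms(2,3,9)] between[OF assms(3,1,10)] by blast
qed

lemma hull_verts_subset_V: "S \<subseteq> V \<Longrightarrow> hull_verts E S \<subseteq> V"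
  unfolding hull_verts_def using path_verts_subset_V by blast

lemma subset_hull_verts:
  assumes "S \<subseteq> V"
  shows "S \<subseteq> hull_verts E S"
proof
  fix a assume a: "a \<in> S"
  then have "path_verts E a a = {a}" using assms path_verts_same by blast
  then show "a \<in> hull_verts E S" using path_verts_subset_hull_verts[OF a a] by blast
qed

lemma path_within_component:
  assumes "C \<in> components E S" "S \<subseteq> V" "c \<in> C" "a \<in> V" "path_verts E c a \<subseteq> S"
  shows "a \<in> C"
proof -
  have "c \<in> V" using assms(1-3) unfolding components_def by blast
  obtain ps where ps: "is_path E ps" "hd ps = c" "last ps = a" "path_verts E c a = set ps"
    by (rule obtain_path[OF \<open>c \<in> V\<close> assms(4)])
  then have "set ps \<subseteq> C"
    using walk_in_component[OF assms(1)] assms(3,5) by (auto simp: is_path_iff_successively)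
  then show ?thesis using ps by (auto simp: is_path_def)
qed

lemma path_between_components:
  assumes "C \<in> components E S" "D \<in> components E S" "C \<noteq> D" "S \<subseteq> V" "a \<in> C" "b \<in> D"
  shows "\<not> path_verts E a b \<subseteq> S"
proof
  assume "path_verts E a b \<subseteq> S"
  moreover have "b \<in> V" using assms(2,4,6) unfolding components_def by blast
  ultimately have "b \<in> C" using path_within_component[OF assms(1,4,5)] by blast
  then show False using components_disjoint[OF assms(1,2) _ assms(6)] assms(3) by blast
qed

lemma component_hull_diff_meets:
  assumes "A \<union> P \<subseteq> V" "C \<in> components E (hull_verts E (A \<union> P) - hull_verts E P)"
  shows "C \<inter> A \<noteq> {}"
proof -
  let ?B = "hull_verts E P" and ?H = "hull_verts E (A \<union> P)"
  have HV: "?H - ?B \<subseteq> V" using hull_verts_subset_V assms(1) by blast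
  have PV: "P \<subseteq> V" using assms(1) by blast
  obtain c where c: "c \<in> C" "c \<in> ?H" "c \<notin> ?B"
    using assms(2) unfolding components_def by blast
  then obtain a b where ab: "a \<in> A \<union> P" "b \<in> A \<union> P" "c \<in> path_verts E a b"
    unfolding hull_verts_def by blast
  have V: "a \<in> V" "b \<in> V" "c \<in> V" using ab assms(1) path_verts_subset_V by blast+
  have reach: "a' \<in> C \<inter> A"
    if "a' \<in> A \<union> P" "path_verts E c a' \<subseteq> ?H" "path_verts E c a' \<inter> ?B = {}" for a'
  proof -
    have "a' \<in> V" using that(1) assms(1) by blast
    then have "a' \<notin> ?B" using that(3) ends_in_path_verts(2)[OF V(3)] by blast
    moreover have "a' \<in> C" using path_within_component[OF assms(2) HV c(1) \<open>a' \<in> V\<close>] that(2,3) by blast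
    ultimately show ?thesis using that(1) subset_hull_verts[OF PV] by blast
  qed
  \<comment> \<open>otherwise c would lie between two vertices of the convex set CH(P)\<close>
  have "path_verts E c a \<inter> ?B = {} \<or> path_verts E c b \<inter> ?B = {}"
  proof (rule ccontr)
    assume "\<not> ?thesis"
    then obtain y z where "y \<in> path_verts E a c" "z \<in> path_verts E c b" "y \<in> ?B" "z \<in> ?B"
      using path_verts_commute[of c a] by blast
    then show False using path_verts_between[OF V(1,2) ab(3)] path_convex_hull_verts[OF PV] c(3)
      unfolding path_convex_def by blast
  qed
  moreover have "path_verts E c a \<subseteq> path_verts E a b"
    using path_verts_subpath[OF V(1,2) ab(3)] by (simp add: path_verts_commute[of c a])
  moreover have "path_verts E c b \<subseteq> path_verts E a b"
    using path_verts_subpath[OF V(2,1), of c] ab(3)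
    by (simp add: path_verts_commute[of c b] path_verts_commute[of b a])
  moreover have "path_verts E a b \<subseteq> ?H" using path_verts_subset_hull_verts ab(1,2) .
  ultimately show ?thesis using reach[of a] reach[of b] ab(1,2) by blast
qed

lemma steiner_closed_no_branching:
  assumes "steiner_closed E A" "A \<subseteq> V" "x \<in> hull_verts E A" "x \<notin> A"
    and "distinct [u1, u2, u3]" "E x u1" "E x u2" "E x u3" "{u1, u2, u3} \<subseteq> hull_verts E A"
  shows False
proof -
  let ?N = "{u \<in> hull_verts E A. E x u}"
  have "card ?N = 2" using assms(1,3,4) unfolding steiner_closed_def by blast
  moreover have "finite ?N"
    using hull_verts_subset_V[OF assms(2)] by (blast intro: finite_subset[OF _ finite_V])
  moreover have "{u1, u2, u3} \<subseteq> ?N" using assms(6-9) by auto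
  ultimately show False using card_mono[of ?N "{u1, u2, u3}"] assms(5) by simp
qed

lemma card_components_hull_diff_le_two:
  assumes "A \<union> P \<subseteq> V" "steiner_closed E A" "A \<inter> hull_verts E P = {}"
  shows "card (components E (hull_verts E (A \<union> P) - hull_verts E P)) \<le> 2"
proof (rule ccontr)
  let ?B = "hull_verts E P" and ?H = "hull_verts E (A \<union> P)"
  let ?X = "components E (?H - ?B)"
  assume "\<not> ?thesis"
  then have "3 \<le> card ?X" by simp
  then obtain Cs where "Cs \<subseteq> ?X" "card Cs = 3" "finite Cs" by (rule obtain_subset_with_card_n)
  moreover from \<open>card Cs = 3\<close> obtain C1 C2 C3
    where "Cs = {C1, C2, C3}" "C1 \<noteq> C2" "C2 \<noteq> C3" "C1 \<noteq> C3"
    unfolding card_3_iff by blast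
  ultimately have C: "C1 \<in> ?X" "C2 \<in> ?X" "C3 \<in> ?X" "C1 \<noteq> C2" "C2 \<noteq> C3" "C3 \<noteq> C1"
    by auto
  obtain q1 q2 q3 where q: "q1 \<in> C1 \<inter> A" "q2 \<in> C2 \<inter> A" "q3 \<in> C3 \<inter> A"
    using component_hull_diff_meets[OF assms(1)] C(1-3) by blast
  have qV: "q1 \<in> V" "q2 \<in> V" "q3 \<in> V" using q assms(1) by blast+
  have HV: "?H - ?B \<subseteq> V" using hull_verts_subset_V[OF assms(1)] by blast
  have meets: "path_verts E a b \<inter> ?B \<noteq> {}"
    if "C \<in> ?X" "D \<in> ?X" "C \<noteq> D" "a \<in> C \<inter> A" "b \<in> D \<inter> A" for C D a b
    using path_between_components[OF that(1-3) HV] path_verts_subset_hull_verts[of a "A \<union> P" b] that(4,5)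
    by blast
  obtain x where x: "x \<in> path_verts E q1 q2" "x \<in> path_verts E q2 q3" "x \<in> path_verts E q3 q1"
    by (rule median_exists[OF qV])
  have "x \<in> ?B"
    using median_in_path_convex[OF qV path_convex_hull_verts[of P] _ _ _ x] assms(1)
      meets[OF C(1,2,4) q(1,2)] meets[OF C(2,3,5) q(2,3)] meets[OF C(3,1,6) q(3,1)] by blast
  then have "x \<notin> A" "x \<notin> {q1, q2, q3}" using assms(3) q by blast+
  obtain u1 u2 u3 where u: "distinct [u1, u2, u3]" "E x u1" "E x u2" "E x u3"
    "{u1, u2, u3} \<subseteq> path_verts E q1 q2 \<union> path_verts E q2 q3"
    by (rule median_branches[OF qV x \<open>x \<notin> {q1, q2, q3}\<close>])
  have "path_verts E q1 q2 \<union> path_verts E q2 q3 \<subseteq> hull_verts E A"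
    using path_verts_subset_hull_verts[of q1 A q2] path_verts_subset_hull_verts[of q2 A q3] q by blast
  then have "x \<in> hull_verts E A" "{u1, u2, u3} \<subseteq> hull_verts E A" using x(1) u(5) by blast+
  moreover have "A \<subseteq> V" using assms(1) by blast
  ultimately show False
    using steiner_closed_no_branching[OF assms(2) _ _ \<open>x \<notin> A\<close> u(1-4)] by blast
qed

end

lemma search_tree_child:
  assumes "search_tree E S (Node r ts)" "t \<in> set ts"
  obtains C where "r \<in> S" "C \<in> components E (S - {r})" "search_tree E C t"
proof -
  obtain cs where cs: "r \<in> S" "set cs = components E (S - {r})" "length ts = length cs"
    "\<forall>i < length ts. search_tree E (cs ! i) (ts ! i)"
    using assms(1) by (cases rule: search_tree.cases) auto
  obtain l where "l < length ts" "ts ! l = t" using assms(2) by (metis in_set_conv_nth)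
  then show ?thesis using that cs by (metis nth_mem)
qed

lemma root_path_subset:
  "root_path T p \<Longrightarrow> search_tree E S T \<Longrightarrow> set p \<subseteq> S"
proof (induction arbitrary: S rule: root_path.induct)
  case (1 r ts)
  then show ?case by (auto elim: search_tree.cases)
next
  case (2 t ts p r)
  then obtain C where "r \<in> S" "C \<in> components E (S - {r})" "search_tree E C t"
    using search_tree_child by metis
  then show ?case using 2 unfolding components_def by auto
qed

lemma root_path_take: "root_path T p \<Longrightarrow> 0 < i \<Longrightarrow> root_path T (take i p)"
proof (induction arbitrary: i rule: root_path.induct)
  case (1 r ts)
  then show ?case by (cases i) (auto intro: root_path.intros)
next
  case (2 t ts p r)
  then show ?case
    by (cases "i = 1") (auto simp: take_Cons' intro: root_path.intros)
qed

lemma root_path_suffix_in_connected_region: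
  "root_path T p \<Longrightarrow> search_tree E S T \<Longrightarrow> 0 < i \<Longrightarrow> i < length p \<Longrightarrow>
   \<exists>R \<subseteq> S. connected_set E R \<and> set (drop i p) \<subseteq> R \<and> set (take i p) \<inter> R = {}"
proof (induction arbitrary: S i rule: root_path.induct)
  case (1 r ts)
  then show ?case by simp
next
  case (2 t ts p r)
  obtain C where C: "C \<in> components E (S - {r})" "search_tree E C t"
    using search_tree_child[OF 2(4,1)] by blast
  then have CS: "C \<subseteq> S - {r}" "connected_set E C" unfolding components_def by blast+
  show ?case
  proof (cases "i = 1")
    case True
    then show ?thesis using CS root_path_subset[OF 2(2) C(2)] by (intro exI[of _ C]) auto
  next
    case False
    then have "0 < i - 1" "i - 1 < length p" using 2(5,6) by auto
    then have "\<exists>R \<subseteq> C. connected_set E R \<and> set (drop (i - 1) p) \<subseteq> R \<and> set (take (i - 1) p) \<inter> R = {}"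
      by (rule 2(3)[OF C(2)])
    then obtain R where "R \<subseteq> C" "connected_set E R" "set (drop (i - 1) p) \<subseteq> R"
      "set (take (i - 1) p) \<inter> R = {}"
      by blast
    moreover have "drop i (r # p) = drop (i - 1) p" "take i (r # p) = r # take (i - 1) p"
      using 2(5) by (simp_all add: drop_Cons' take_Cons')
    ultimately show ?thesis using CS by (intro exI[of _ R]) auto
  qed
qed

theorem mainTheorem5:
  fixes V :: "'a set" and E :: "'a \<Rightarrow> 'a \<Rightarrow> bool" and T :: "'a rtree"
    and p :: "'a list" and i :: nat
  assumes "is_tree V E"
    and "search_tree E V T"
    and "steiner_closed_tree E T"
    and "root_path T p"
    and "1 \<le> i" and "i < length p"
  shows "card (components E (hull_verts E (set p) - hull_verts E (set (drop i p)))) \<le> 2"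
proof -
  interpret tree_graph V E by (rule tree_graph.intro) (fact assms(1))
  let ?A = "set (take i p)" and ?P = "set (drop i p)"
  have i: "0 < i" using assms(5) by simp
  obtain R where R: "R \<subseteq> V" "connected_set E R" "?P \<subseteq> R" "?A \<inter> R = {}"
    using root_path_suffix_in_connected_region[OF assms(4,2) i assms(6)] by blast
  have "?A \<inter> hull_verts E ?P = {}"
    using hull_verts_subset_path_convex[OF path_convex_if_connected[OF R(1,2)] R(3)] R(4) by blast
  moreover have "steiner_closed E ?A"
    using assms(3) root_path_take[OF assms(4) i] unfolding steiner_closed_tree_def by blast
  moreover have "set p = ?A \<union> ?P" by (metis append_take_drop_id set_append)
  moreover have "set p \<subseteq> V" using root_path_subset[OF assms(4,2)] .
  ultimately show ?thesis using card_components_hull_diff_le_two by metis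
qed

end
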